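(* Fix an RWA-P instance (setting as in the context) and let $M=\max_{r\in R}\big(\max_{w\in W^r}B^r_w+\max_{p\in P^r}B^r_p\big)$. If $\alpha,\beta>0$ satisfy $$\frac{\beta}{\alpha}>|R|\,(M-2)+2,$$ then for every pair of feasible solutions $(\hat x,\hat y)$, $(\tilde x,\tilde y)$ with $f_\beta(\hat x)>f_\beta(\tilde x)$ we have $f(\hat x,\hat y)<f(\tilde x,\tilde y)$.
   Context: An RWA-P instance consists of: a directed graph $G=(V,E)$ (parallel arcs allowed), whose arcs are called links; a finite set $\Lambda$ of wavelengths; a finite set $R$ of requests, each request $r$ having a source node $s^r$ and a distinct destination node $t^r$; and for each $r\in R$ nonempty finite sets $W^r$ (working lightpaths) and $P^r$ (protection lightpaths). Each lightpath $\ell$ of request $r$ is a directed path in $G$ from $s^r$ to $t^r$ together with a wavelength $\Lambda[\ell]\in\Lambda$; $E[\ell]$ denotes its set of links and its length is $B^r_\ell=|E[\ell]|\ge1$. Conflict sets: $\mathcal C_1=\{(r,w,p): w\in W^r,p\in P^r, E[w]\cap E[p]\ne\emptyset\}$; $\mathcal C_2=\{(r_1,r_2,w,p): r_1\ne r_2, w\in W^{r_1}, p\in P^{r_2}, \Lambda[w]=\Lambda[p], E[w]\cap E[p]\neq\emptyset\}$; $\mathcal C_3=\{(r_1,r_2,w_1,w_2): w_1\in W^{r_1}, w_2\in W^{r_2}, (r_1,w_1)\ne(r_2,w_2), \Lambda[w_1]=\Lambda[w_2], E[w_1]\cap E[w_2]\ne\emptyset\}$; $\mathcal C_4$ analogously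 for pairs of distinct protection lightpaths. A solution is a pair of binary vectors $x=(x^r_w)$, $y=(y^r_p)$; it is feasible if $\sum_{w\in W^r}x^r_w=\sum_{p\in P^r}y^r_p$ and $\sum_{w\in W^r}x^r_w\le1$ for all $r$, and $x^r_w+y^r_p\le1$ for $(r,w,p)\in\mathcal C_1$, $x^{r_1}_w+y^{r_2}_p\le1$ on $\mathcal C_2$, $x^{r_1}_{w_1}+x^{r_2}_{w_2}\le1$ on $\mathcal C_3$, $y^{r_1}_{p_1}+y^{r_2}_{p_2}\le1$ on $\mathcal C_4$. Define $f_\alpha(x,y)=\sum_{r}\big(\sum_{w}B^r_wx^r_w+\sum_{p}B^r_py^r_p\big)$ (link usage), $f_\beta(x)=\sum_r\sum_w x^r_w$ (granted requests), and $f(x,y)=\alpha f_\alpha(x,y)-\beta f_\beta(x)$. *)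

theory Defs
  imports Complex_Main
begin

text \<open>Directed graph: links of type 'e with tail and head maps (parallel arcs allowed).\<close>

definition is_dpath :: "'v set \<Rightarrow> 'e set \<Rightarrow> ('e \<Rightarrow> 'v) \<Rightarrow> ('e \<Rightarrow> 'v) \<Rightarrow> 'v \<Rightarrow> 'v \<Rightarrow> 'e list \<Rightarrow> bool" where
  "is_dpath V E src dst s t es \<longleftrightarrow>
     es \<noteq> [] \<and> set es \<subseteq> E \<and>
     src (List.hd es) = s \<and> dst (List.last es) = t \<and>
     (\<forall>i. Suc i < length es \<longrightarrow> dst (es ! i) = src (es ! Suc i)) \<and>
     distinct (map src es @ [dst (List.last es)])"

text \<open>An RWA-P instance. Lightpaths are abstract identifiers of type 'p, with
link list lnk and wavelength lam; E[l] = set (lnk l).\<close>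

definition rwap_instance ::
  "'v set \<Rightarrow> 'e set \<Rightarrow> ('e \<Rightarrow> 'v) \<Rightarrow> ('e \<Rightarrow> 'v) \<Rightarrow> 'l set \<Rightarrow> 'r set \<Rightarrow>
   ('r \<Rightarrow> 'v) \<Rightarrow> ('r \<Rightarrow> 'v) \<Rightarrow> ('r \<Rightarrow> 'p set) \<Rightarrow> ('r \<Rightarrow> 'p set) \<Rightarrow>
   ('p \<Rightarrow> 'e list) \<Rightarrow> ('p \<Rightarrow> 'l) \<Rightarrow> bool" where
  "rwap_instance V E src dst \<Lambda> R s t W P lnk lam \<longleftrightarrow>
     (\<forall>e\<in>E. src e \<in> V \<and> dst e \<in> V) \<and>
     finite \<Lambda> \<and> finite R \<and>
     (\<forall>r\<in>R. s r \<in> V \<and> t r \<in> V \<and> s r \<noteq> t r \<and>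
        finite (W r) \<and> W r \<noteq> {} \<and> finite (P r) \<and> P r \<noteq> {} \<and>
        (\<forall>l \<in> W r \<union> P r. is_dpath V E src dst (s r) (t r) (lnk l) \<and> lam l \<in> \<Lambda>))"

definition lpE :: "('p \<Rightarrow> 'e list) \<Rightarrow> 'p \<Rightarrow> 'e set" where
  "lpE lnk l = set (lnk l)"

definition lpB :: "('p \<Rightarrow> 'e list) \<Rightarrow> 'p \<Rightarrow> nat" where
  "lpB lnk l = card (lpE lnk l)"

definition feasible ::
  "'r set \<Rightarrow> ('r \<Rightarrow> 'p set) \<Rightarrow> ('r \<Rightarrow> 'p set) \<Rightarrow> ('p \<Rightarrow> 'e list) \<Rightarrow> ('p \<Rightarrow> 'l) \<Rightarrow>
   ('r \<Rightarrow> 'p \<Rightarrow> nat) \<Rightarrow> ('r \<Rightarrow> 'p \<Rightarrow> nat) \<Rightarrow> bool" where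
  "feasible R W P lnk lam x y \<longleftrightarrow>
     (\<forall>r\<in>R. \<forall>w\<in>W r. x r w \<in> {0,1}) \<and>
     (\<forall>r\<in>R. \<forall>p\<in>P r. y r p \<in> {0,1}) \<and>
     (\<forall>r\<in>R. (\<Sum>w\<in>W r. x r w) = (\<Sum>p\<in>P r. y r p) \<and> (\<Sum>w\<in>W r. x r w) \<le> 1) \<and>
     \<comment> \<open>C1\<close>
     (\<forall>r\<in>R. \<forall>w\<in>W r. \<forall>p\<in>P r. lpE lnk w \<inter> lpE lnk p \<noteq> {} \<longrightarrow> x r w + y r p \<le> 1) \<and>
     \<comment> \<open>C2\<close>
     (\<forall>r1\<in>R. \<forall>r2\<in>R. \<forall>w\<in>W r1. \<forall>p\<in>P r2.
        r1 \<noteq> r2 \<and> lam w = lam p \<and> lpE lnk w \<inter> lpE lnk p \<noteq> {} \<longrightarrow> x r1 w + y r2 p \<le> 1) \<and>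
     \<comment> \<open>C3\<close>
     (\<forall>r1\<in>R. \<forall>r2\<in>R. \<forall>w1\<in>W r1. \<forall>w2\<in>W r2.
        (r1, w1) \<noteq> (r2, w2) \<and> lam w1 = lam w2 \<and> lpE lnk w1 \<inter> lpE lnk w2 \<noteq> {} \<longrightarrow>
        x r1 w1 + x r2 w2 \<le> 1) \<and>
     \<comment> \<open>C4\<close>
     (\<forall>r1\<in>R. \<forall>r2\<in>R. \<forall>p1\<in>P r1. \<forall>p2\<in>P r2.
        (r1, p1) \<noteq> (r2, p2) \<and> lam p1 = lam p2 \<and> lpE lnk p1 \<inter> lpE lnk p2 \<noteq> {} \<longrightarrow>
        y r1 p1 + y r2 p2 \<le> 1)"

definition f_alpha ::
  "'r set \<Rightarrow> ('r \<Rightarrow> 'p set) \<Rightarrow> ('r \<Rightarrow> 'p set) \<Rightarrow> ('p \<Rightarrow> 'e list) \<Rightarrow>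
   ('r \<Rightarrow> 'p \<Rightarrow> nat) \<Rightarrow> ('r \<Rightarrow> 'p \<Rightarrow> nat) \<Rightarrow> nat" where
  "f_alpha R W P lnk x y =
     (\<Sum>r\<in>R. (\<Sum>w\<in>W r. lpB lnk w * x r w) + (\<Sum>p\<in>P r. lpB lnk p * y r p))"

definition f_beta :: "'r set \<Rightarrow> ('r \<Rightarrow> 'p set) \<Rightarrow> ('r \<Rightarrow> 'p \<Rightarrow> nat) \<Rightarrow> nat" where
  "f_beta R W x = (\<Sum>r\<in>R. \<Sum>w\<in>W r. x r w)"

definition f_obj ::
  "real \<Rightarrow> real \<Rightarrow> 'r set \<Rightarrow> ('r \<Rightarrow> 'p set) \<Rightarrow> ('r \<Rightarrow> 'p set) \<Rightarrow> ('p \<Rightarrow> 'e list) \<Rightarrow>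
   ('r \<Rightarrow> 'p \<Rightarrow> nat) \<Rightarrow> ('r \<Rightarrow> 'p \<Rightarrow> nat) \<Rightarrow> real" where
  "f_obj \<alpha> \<beta> R W P lnk x y = \<alpha> * real (f_alpha R W P lnk x y) - \<beta> * real (f_beta R W x)"

definition maxlen ::
  "'r set \<Rightarrow> ('r \<Rightarrow> 'p set) \<Rightarrow> ('r \<Rightarrow> 'p set) \<Rightarrow> ('p \<Rightarrow> 'e list) \<Rightarrow> nat" where
  "maxlen R W P lnk = Max ((\<lambda>r. Max (lpB lnk ` W r) + Max (lpB lnk ` P r)) ` R)"

end

theory Submission
  imports Defs
begin

text \<open>Every lightpath has length at least 1, and a granted request uses exactly one working and
one protection lightpath, so it contributes between 2 and M to the link usage; each request is
granted at most once. Writing \<open>b > b'\<close> for the numbers of granted requests of the two solutions,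
and using \<open>b \<le> |R|\<close>, \<open>b - b' \<ge> 1\<close> and \<open>M \<ge> 2\<close>,
\<open>f\<^sub>\<alpha>(x\<^sub>h, y\<^sub>h) - f\<^sub>\<alpha>(x\<^sub>t, y\<^sub>t) \<le> M b - 2 b' = (M - 2) b + 2 (b - b') \<le> (|R| (M - 2) + 2) (b - b') < (\<beta>/\<alpha>) (b - b')\<close>.\<close>

lemma sum_mult_le_Max_mult_sum:
  fixes f x :: "'a \<Rightarrow> 'b::linordered_semiring"
  assumes "finite A" and "\<And>a. a \<in> A \<Longrightarrow> 0 \<le> x a"
  shows "(\<Sum>a\<in>A. f a * x a) \<le> Max (f ` A) * sum x A"
proof -
  have "(\<Sum>a\<in>A. f a * x a) \<le> (\<Sum>a\<in>A. Max (f ` A) * x a)"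
    using assms by (intro sum_mono mult_right_mono) auto
  then show ?thesis
    by (simp add: sum_distrib_left)
qed

lemma rwap_instance_lpB_ge_1:
  assumes "rwap_instance V E src dst \<Lambda> R s t W P lnk lam" and "r \<in> R" and "l \<in> W r \<union> P r"
  shows "1 \<le> lpB lnk l"
proof -
  have "is_dpath V E src dst (s r) (t r) (lnk l)"
    using assms unfolding rwap_instance_def by blast
  then have "lnk l \<noteq> []"
    unfolding is_dpath_def by blast
  then show ?thesis
    unfolding lpB_def lpE_def by (simp add: Suc_le_eq card_gt_0_iff)
qed

lemma maxlen_ge_2:
  assumes inst: "rwap_instance V E src dst \<Lambda> R s t W P lnk lam" and "R \<noteq> {}"
  shows "2 \<le> maxlen R W P lnk"
proof -
  obtain r where r: "r \<in> R"
    using \<open>R \<noteq> {}\<close> by blast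
  have fin: "finite R" "finite (W r)" "finite (P r)" and ne: "W r \<noteq> {}" "P r \<noteq> {}"
    using inst r unfolding rwap_instance_def by auto
  obtain w p where "w \<in> W r" "p \<in> P r"
    using ne by blast
  then have "1 \<le> lpB lnk w" "1 \<le> lpB lnk p"
    using rwap_instance_lpB_ge_1[OF inst r] by auto
  moreover have "lpB lnk w \<le> Max (lpB lnk ` W r)" "lpB lnk p \<le> Max (lpB lnk ` P r)"
    using fin \<open>w \<in> W r\<close> \<open>p \<in> P r\<close> by auto
  moreover have "Max (lpB lnk ` W r) + Max (lpB lnk ` P r) \<le> maxlen R W P lnk"
    unfolding maxlen_def using fin r by (intro Max_ge) auto
  ultimately show ?thesis
    by linarith
qed

lemma feasible_request_sums:
  assumes "feasible R W P lnk lam x y" and "r \<in> R"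
  shows "(\<Sum>w\<in>W r. x r w) = (\<Sum>p\<in>P r. y r p)" and "(\<Sum>w\<in>W r. x r w) \<le> 1"
proof -
  have "\<forall>r\<in>R. (\<Sum>w\<in>W r. x r w) = (\<Sum>p\<in>P r. y r p) \<and> (\<Sum>w\<in>W r. x r w) \<le> 1"
    using assms(1) unfolding feasible_def by (elim conjE)
  then show "(\<Sum>w\<in>W r. x r w) = (\<Sum>p\<in>P r. y r p)" and "(\<Sum>w\<in>W r. x r w) \<le> 1"
    using assms(2) by auto
qed

lemma f_beta_le_card:
  assumes "feasible R W P lnk lam x y"
  shows "f_beta R W x \<le> card R"
proof -
  have "f_beta R W x \<le> (\<Sum>r\<in>R. 1)"
    unfolding f_beta_def using feasible_request_sums(2)[OF assms] by (intro sum_mono)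
  then show ?thesis
    by simp
qed

lemma f_alpha_le_maxlen_f_beta:
  assumes inst: "rwap_instance V E src dst \<Lambda> R s t W P lnk lam"
    and feas: "feasible R W P lnk lam x y"
  shows "f_alpha R W P lnk x y \<le> maxlen R W P lnk * f_beta R W x"
proof -
  have "(\<Sum>w\<in>W r. lpB lnk w * x r w) + (\<Sum>p\<in>P r. lpB lnk p * y r p)
      \<le> maxlen R W P lnk * (\<Sum>w\<in>W r. x r w)" if r: "r \<in> R" for r
  proof -
    have fin: "finite R" "finite (W r)" "finite (P r)"
      using inst r unfolding rwap_instance_def by auto
    have "(\<Sum>w\<in>W r. lpB lnk w * x r w) + (\<Sum>p\<in>P r. lpB lnk p * y r p)
        \<le> Max (lpB lnk ` W r) * (\<Sum>w\<in>W r. x r w) + Max (lpB lnk ` P r) * (\<Sum>p\<in>P r. y r p)"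
      using fin by (intro add_mono sum_mult_le_Max_mult_sum) auto
    also have "\<dots> = (Max (lpB lnk ` W r) + Max (lpB lnk ` P r)) * (\<Sum>w\<in>W r. x r w)"
      using feasible_request_sums(1)[OF feas r] by (simp add: algebra_simps)
    also have "\<dots> \<le> maxlen R W P lnk * (\<Sum>w\<in>W r. x r w)"
      unfolding maxlen_def using fin r by (intro mult_right_mono Max_ge) auto
    finally show ?thesis .
  qed
  then show ?thesis
    unfolding f_alpha_def f_beta_def sum_distrib_left by (rule sum_mono)
qed

lemma two_f_beta_le_f_alpha:
  assumes inst: "rwap_instance V E src dst \<Lambda> R s t W P lnk lam"
    and feas: "feasible R W P lnk lam x y"
  shows "2 * f_beta R W x \<le> f_alpha R W P lnk x y"
proof -
  have "2 * (\<Sum>w\<in>W r. x r w) \<le> (\<Sum>w\<in>W r. lpB lnk w * x r w) + (\<Sum>p\<in>P r. lpB lnk p * y r p)"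
    if r: "r \<in> R" for r
  proof -
    have "(\<Sum>w\<in>W r. x r w) \<le> (\<Sum>w\<in>W r. lpB lnk w * x r w)"
      "(\<Sum>p\<in>P r. y r p) \<le> (\<Sum>p\<in>P r. lpB lnk p * y r p)"
      using rwap_instance_lpB_ge_1[OF inst r] by (auto intro!: sum_mono)
    then show ?thesis
      using feasible_request_sums(1)[OF feas r] by linarith
  qed
  then show ?thesis
    unfolding f_alpha_def f_beta_def sum_distrib_left by (rule sum_mono)
qed

lemma weighted_gain_dominates:
  fixes \<alpha> \<beta> a a' b b' m n :: real
  assumes "\<alpha> > 0" and ratio: "\<beta> / \<alpha> > n * (m - 2) + 2"
    and "a \<le> m * b" "2 * b' \<le> a'" "b \<le> n" "b' + 1 \<le> b" "0 \<le> b'" "2 \<le> m"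
  shows "\<alpha> * a - \<beta> * b < \<alpha> * a' - \<beta> * b'"
proof -
  have "a - a' \<le> (m - 2) * b + 2 * (b - b')"
    using assms by (simp add: algebra_simps)
  also have "\<dots> \<le> (m - 2) * n + 2 * (b - b')"
    using assms by (simp add: mult_left_mono)
  also have "\<dots> \<le> ((m - 2) * n + 2) * (b - b')"
  proof -
    have "0 \<le> (m - 2) * n"
      using assms by (intro mult_nonneg_nonneg) auto
    then have "(m - 2) * n * 1 \<le> (m - 2) * n * (b - b')"
      using assms by (intro mult_left_mono) auto
    then show ?thesis
      by (simp add: algebra_simps)
  qed
  also have "\<dots> < \<beta> / \<alpha> * (b - b')"
    using assms by (intro mult_strict_right_mono) (simp_all add: algebra_simps)
  finally have "\<alpha> * (a - a') < \<beta> * (b - b')"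
    using \<open>\<alpha> > 0\<close> by (simp add: field_simps)
  then show ?thesis
    by (simp add: algebra_simps)
qed

theorem proposition2:
  fixes V :: "'v set" and E :: "'e set" and src dst :: "'e \<Rightarrow> 'v"
    and \<Lambda> :: "'l set" and R :: "'r set" and s t :: "'r \<Rightarrow> 'v"
    and W P :: "'r \<Rightarrow> 'p set" and lnk :: "'p \<Rightarrow> 'e list" and lam :: "'p \<Rightarrow> 'l"
    and \<alpha> \<beta> :: real
    and xh yh xt yt :: "'r \<Rightarrow> 'p \<Rightarrow> nat"
  assumes inst: "rwap_instance V E src dst \<Lambda> R s t W P lnk lam"
    and pos: "\<alpha> > 0" "\<beta> > 0"
    and ratio: "\<beta> / \<alpha> > real (card R) * (real (maxlen R W P lnk) - 2) + 2"
    and feas_h: "feasible R W P lnk lam xh yh"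
    and feas_t: "feasible R W P lnk lam xt yt"
    and more: "f_beta R W xh > f_beta R W xt"
  shows "f_obj \<alpha> \<beta> R W P lnk xh yh < f_obj \<alpha> \<beta> R W P lnk xt yt"
proof -
  have "R \<noteq> {}"
    using more unfolding f_beta_def by auto
  have "real (f_alpha R W P lnk xh yh) \<le> real (maxlen R W P lnk) * real (f_beta R W xh)"
    using f_alpha_le_maxlen_f_beta[OF inst feas_h] by (metis of_nat_le_iff of_nat_mult)
  moreover have "2 * real (f_beta R W xt) \<le> real (f_alpha R W P lnk xt yt)"
    using two_f_beta_le_f_alpha[OF inst feas_t] by (metis of_nat_le_iff of_nat_mult of_nat_numeral)
  moreover have "real (f_beta R W xh) \<le> real (card R)"
    using f_beta_le_card[OF feas_h] by simp
  moreover have "2 \<le> real (maxlen R W P lnk)"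
    using maxlen_ge_2[OF inst \<open>R \<noteq> {}\<close>] by simp
  ultimately show ?thesis
    unfolding f_obj_def using more by (intro weighted_gain_dominates[OF \<open>\<alpha> > 0\<close> ratio]) auto
qed

end
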